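(* Let $f:\mathbb{R}^n\to\mathbb{R}$ and $c:\mathbb{R}^n\to\mathbb{R}^m$ ($m<n$) be smooth, with $g=\nabla f$ and Jacobian $J=\nabla c$. Suppose noisy evaluations satisfy, for all $x$, $|\tilde f(x)-f(x)|\le\epsilon_f$, $\|\tilde c(x)-c(x)\|_1\le\epsilon_c$, $\|\tilde g(x)-g(x)\|\le\epsilon_g$, $\|\tilde J(x)-J(x)\|_{1,2}\le\epsilon_J$. Let $\{x_k\}$ be a sequence with $\sigma_{\min}(J_k)\ge\gamma>\epsilon_J$ for all $k$; set $\delta=1/(\gamma-\epsilon_J)$, $\eta=1/\gamma$. Let $0<\beta_k\le b_u$, let $d_k$ solve $\min_d\tfrac12\beta_k\|d\|^2+\tilde g_k^Td$ s.t. $\tilde c_k+\tilde J_kd=0$; fix $\tau\in(0,1)$ and suppose $\pi_k\ge\frac{1}{1-\tau}\|(\tilde J_k\tilde J_k^T)^{-1}\tilde J_k\tilde g_k\|_\infty$ for every $k$. Define $\psi_\pi(x)=\frac{1}{b_u}\|P(x)g(x)\|^2+\pi\tau\|c(x)\|_1$ and $$E(x,\beta,\pi)=\frac{1}{\beta}\big(\|g(x)\|^2\eta\epsilon_J+\epsilon_g\|g(x)\|\big)+\epsilon_g\delta(\|c(x)\|_1+\epsilon_c)+\pi\Big[(2-\tau)\epsilon_c+\epsilon_J\Big(\delta(\|c(x)\|_1+\epsilon_c)+\frac{1}{\beta}\big(\|P(x)g(x)\|+\|g(x)\|\eta\epsilon_J+\epsilon_g\big)\Big)\Big].$$ Choose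 any $\theta_1\in[0,1)$. For any $x_k$ such that $\psi_{\pi_k}(x_k)\ge E(x_k,\beta_k,\pi_k)/(1-\theta_1)$, we have $$\ell(x_k;d_k)\le-\theta_1\Big(\frac{1}{\beta_k}g_k^TP_kg_k+\tau\pi_k\|c_k\|_1\Big)\le-\theta_1\psi_{\pi_k}(x_k),$$ where $\ell(x_k;d_k)=g_k^Td_k+\pi_k\|c_k+J_kd_k\|_1-\pi_k\|c_k\|_1$.
   Context: $\|\cdot\|$ is the Euclidean norm; $\|A\|_{1,2}=\sup_{x\ne0}\|Ax\|_1/\|x\|$; $\sigma_{\min}$ is the smallest singular value. Subscript $k$ denotes evaluation at $x_k$. $P(x)=I-J(x)^T(J(x)J(x)^T)^{-1}J(x)$ and $P_k=P(x_k)$. The constant $b_u$ is an upper bound on $\beta_k$ for all $k$. *)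

theory Defs
  imports "HOL-Analysis.Analysis"
begin

definition l1norm :: "real ^ 'm \<Rightarrow> real" where
  "l1norm v = (\<Sum>i\<in>UNIV. \<bar>v $ i\<bar>)"

definition opnorm_1_2 :: "real ^ 'n ^ 'm \<Rightarrow> real" where
  "opnorm_1_2 A = (SUP x\<in>{x. x \<noteq> 0}. l1norm (A *v x) / norm x)"

text \<open>Smallest singular value of an m x n matrix J with m < n
  (the m singular values of J): min over unit y in R^m of norm (J^T y).\<close>
definition sigma_min :: "real ^ 'n ^ 'm \<Rightarrow> real" where
  "sigma_min J = (INF y\<in>{y. norm y = 1}. norm (transpose J *v y))"

definition projP :: "real ^ 'n ^ 'm \<Rightarrow> real ^ 'n ^ 'n" where
  "projP J = mat 1 - transpose J ** matrix_inv (J ** transpose J) ** J"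

end

theory Submission
  imports Defs
begin

(* The noisy subproblem is solved by the step
     d = -(1/beta) P~ g~ - J~^T (J~ J~^T)^-1 c~,
   with P~ the projection onto the kernel of J~. As sigma_min J >= gamma and J~ is
   eps_J-close to J, the row spaces of J and J~ are close: both P~ (I - P) and (I - P~) P
   have norm at most eps_J/gamma. The first bound is direct; the second follows from it
   because the two kernels have the same dimension, so that P maps the kernel of J~ onto
   the kernel of J. Hence g^T P~ g~ >= g^T P g - (eps_J/gamma) |g|^2 - eps_g |g|, and,
   using c~ + J~ d = 0 and the bound on pi, the remaining terms of l(x_k; d_k) exceed
   their noise-free values by at most the rest of E, which psi >= E/(1 - theta_1)
   absorbs. *)

declare transpose_matrix_vector[simp del] vector_transpose_matrix[simp del]

lemma inner_matrix_vector_transpose: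
  "(A *v (x::real^'n)) \<bullet> (y::real^'m) = x \<bullet> (transpose A *v y)"
  by (metis dot_lmul_matrix inner_commute transpose_matrix_vector)

lemma transpose_diff: "transpose (A - B) = transpose A - (transpose B :: real^'n^'m)"
  by (simp add: transpose_def vec_eq_iff)

lemma matrix_vector_mult_uminus_right: "(A::real^'n^'m) *v (- x) = - (A *v x)"
  by (simp add: matrix_vector_mult_def vec_eq_iff sum_negf)

lemma le_if_square_le_mult:
  assumes "(x::real)\<^sup>2 \<le> x * c" "0 \<le> x" "0 \<le> c"
  shows "x \<le> c"
proof (rule ccontr)
  assume "\<not> x \<le> c"
  then have "x * c < x * x" using assms by (intro mult_strict_left_mono) auto
  then show False using assms by (simp add: power2_eq_square)
qed

lemma norm_transpose_matrix_vector_le: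
  fixes E :: "real^'n^'m"
  assumes "\<And>x. norm (E *v x) \<le> e * norm x" "0 \<le> e"
  shows "norm (transpose E *v u) \<le> e * norm u"
proof -
  have "(norm (transpose E *v u))\<^sup>2 = u \<bullet> (E *v (transpose E *v u))"
    by (metis inner_matrix_vector_transpose inner_commute power2_norm_eq_inner transpose_transpose)
  also have "\<dots> \<le> norm u * norm (E *v (transpose E *v u))" by (rule norm_cauchy_schwarz)
  also have "\<dots> \<le> norm u * (e * norm (transpose E *v u))" by (intro mult_left_mono assms) simp
  finally have "(norm (transpose E *v u))\<^sup>2 \<le> norm (transpose E *v u) * (e * norm u)"
    by (simp add: algebra_simps)
  then show ?thesis by (rule le_if_square_le_mult) (use assms in simp_all)
qed

lemma subspace_kernel_matrix: "subspace {x. (A::real^'n^'m) *v x = 0}"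
  by (auto simp: subspace_def matrix_vector_right_distrib matrix_vector_mult_scaleR)

lemma kernel_eq_orthogonal_range_transpose:
  fixes A :: "real^'n^'m"
  shows "{x. A *v x = 0} = {y \<in> UNIV. \<forall>x \<in> range (\<lambda>u. transpose A *v u). orthogonal x y}"
proof (auto simp: orthogonal_def)
  fix x u assume "A *v x = 0"
  then show "(transpose A *v u) \<bullet> x = 0"
    by (metis inner_matrix_vector_transpose inner_commute inner_zero_left)
next
  fix y assume "\<forall>u. (transpose A *v u) \<bullet> y = 0"
  then have "(A *v y) \<bullet> (A *v y) = 0" by (metis inner_matrix_vector_transpose inner_commute)
  then show "A *v y = 0" by simp
qed

lemma dim_kernel_add_dim_range_transpose:
  fixes A :: "real^'n^'m"
  shows "dim {x. A *v x = 0} + dim (range (\<lambda>u. transpose A *v u)) = CARD('n)"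
  unfolding kernel_eq_orthogonal_range_transpose
  by (subst dim_subspace_orthogonal_to_vectors)
     (auto intro: real_vector.linear_subspace_image matrix_vector_mul_linear)

lemma dim_kernel_eq_if_inj_transpose:
  fixes A B :: "real^'n^'m"
  assumes "inj (\<lambda>y. transpose A *v y)" "inj (\<lambda>y. transpose B *v y)"
  shows "dim {x. A *v x = 0} = dim {x. B *v x = 0}"
proof -
  have "dim (range (\<lambda>y. transpose C *v y)) = CARD('m)" if "inj (\<lambda>y. transpose C *v y)"
    for C :: "real^'n^'m"
  proof -
    have "dim ((\<lambda>y. transpose C *v y) ` UNIV) = dim (UNIV :: (real^'m) set)"
      by (rule dim_image_eq) (use that in auto)
    then show ?thesis by simp
  qed
  then show ?thesis
    using dim_kernel_add_dim_range_transpose[of A] dim_kernel_add_dim_range_transpose[of B] assms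
    by simp
qed

lemma l1norm_nonneg: "0 \<le> l1norm v"
  unfolding l1norm_def by (simp add: sum_nonneg)

lemma norm_le_l1norm: "norm v \<le> l1norm v"
  unfolding l1norm_def by (rule norm_le_l1_cart)

lemma l1norm_triangle: "l1norm (a + b) \<le> l1norm a + l1norm b"
  unfolding l1norm_def by (simp add: sum.distrib[symmetric] sum_mono abs_triangle_ineq)

lemma l1norm_minus_commute: "l1norm (a - b) = l1norm (b - a)"
  unfolding l1norm_def by (simp add: abs_minus_commute)

lemma l1norm_uminus: "l1norm (- v) = l1norm v"
  by (simp add: l1norm_def)

lemma l1norm_le_card_mult_norm: "l1norm (v::real^'m) \<le> CARD('m) * norm v"
proof -
  have "l1norm v \<le> (\<Sum>i\<in>(UNIV::'m set). norm v)"
    unfolding l1norm_def by (intro sum_mono) (simp add: component_le_norm_cart)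
  then show ?thesis by simp
qed

lemma abs_inner_le_infnorm_mult_l1norm: "\<bar>(w::real^'m) \<bullet> v\<bar> \<le> infnorm w * l1norm v"
proof -
  have "\<bar>w \<bullet> v\<bar> \<le> (\<Sum>i\<in>UNIV. \<bar>w$i * v$i\<bar>)"
    unfolding inner_vec_def inner_real_def by (rule sum_abs)
  also have "\<dots> \<le> (\<Sum>i\<in>UNIV. infnorm w * \<bar>v$i\<bar>)"
    by (intro sum_mono) (simp add: abs_mult mult_right_mono component_le_infnorm_cart)
  finally show ?thesis by (simp add: l1norm_def sum_distrib_left)
qed

lemma l1norm_le_opnorm_1_2:
  fixes E :: "real^'n^'m"
  assumes "opnorm_1_2 E \<le> e"
  shows "l1norm (E *v x) \<le> e * norm x"
proof (cases "x = 0")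
  case True then show ?thesis by (simp add: l1norm_def)
next
  case False
  obtain K where K: "\<And>x. norm (E *v x) \<le> norm x * K"
    using bounded_linear.bounded[OF matrix_vector_mul_bounded_linear] by blast
  have "bdd_above ((\<lambda>x. l1norm (E *v x) / norm x) ` {x. x \<noteq> 0})"
  proof (rule bdd_aboveI2)
    fix y :: "real^'n" assume "y \<in> {x. x \<noteq> 0}"
    moreover have "l1norm (E *v y) \<le> CARD('m) * (norm y * K)"
      using l1norm_le_card_mult_norm[of "E *v y"] K[of y]
      by (meson mult_left_mono of_nat_0_le_iff order_trans)
    ultimately show "l1norm (E *v y) / norm y \<le> CARD('m) * K"
      by (simp add: divide_le_eq mult.commute mult.left_commute)
  qed
  then have "l1norm (E *v x) / norm x \<le> opnorm_1_2 E"
    unfolding opnorm_1_2_def using False by (intro cSUP_upper) auto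
  then show ?thesis
    using False assms
    by (simp add: divide_le_eq mult.commute) (meson mult_right_mono norm_ge_zero order_trans)
qed

lemma opnorm_1_2_nonneg: "0 \<le> opnorm_1_2 (E::real^'n^'m)"
proof -
  fix i :: 'n
  have "0 \<le> opnorm_1_2 E * norm (axis i (1::real))"
    using l1norm_le_opnorm_1_2[of E "opnorm_1_2 E" "axis i 1"] l1norm_nonneg
    by (metis order_refl order_trans)
  then show ?thesis by simp
qed

lemma norm_transpose_ge_sigma_min:
  fixes J :: "real^'n^'m"
  assumes "\<gamma> \<le> sigma_min J"
  shows "\<gamma> * norm y \<le> norm (transpose J *v y)"
proof (cases "y = 0")
  case True then show ?thesis by simp
next
  case False
  define u where "u = (1 / norm y) *\<^sub>R y"
  have "sigma_min J \<le> norm (transpose J *v u)"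
    unfolding sigma_min_def using False
    by (intro cINF_lower) (auto intro: bdd_belowI[where m=0] simp: u_def)
  also have "transpose J *v u = (1 / norm y) *\<^sub>R (transpose J *v y)"
    by (simp add: u_def matrix_vector_mult_scaleR)
  finally show ?thesis
    using False assms by (simp add: le_divide_eq) (meson mult_right_mono norm_ge_zero order_trans)
qed

locale full_row_rank =
  fixes A :: "real^'n^'m" and s :: real
  assumes s_pos: "0 < s" and norm_transpose_ge: "\<And>y. s * norm y \<le> norm (transpose A *v y)"
begin

lemma transpose_eq_0_iff: "transpose A *v y = 0 \<longleftrightarrow> y = 0"
  using norm_transpose_ge[of y] s_pos by (auto simp: mult_le_0_iff)

lemma inj_transpose: "inj (\<lambda>y. transpose A *v y)"
proof (rule injI)
  fix y z assume "transpose A *v y = transpose A *v z"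
  then have "transpose A *v (y - z) = 0" by (simp add: matrix_vector_mult_diff_distrib)
  then show "y = z" by (simp add: transpose_eq_0_iff)
qed

definition gram_inv :: "real^'m^'m" where
  "gram_inv = matrix_inv (A ** transpose A)"

lemma gram_inv_inverse:
  "(A ** transpose A) ** gram_inv = mat 1" "gram_inv ** (A ** transpose A) = mat 1"
proof -
  have "y = 0" if "(A ** transpose A) *v y = 0" for y
  proof -
    have "(transpose A *v y) \<bullet> (transpose A *v y) = y \<bullet> ((A ** transpose A) *v y)"
      by (metis inner_matrix_vector_transpose inner_commute matrix_vector_mul_assoc)
    then show "y = 0" using that by (simp add: transpose_eq_0_iff)
  qed
  then have "invertible (A ** transpose A)"
    using matrix_left_invertible_ker invertible_left_inverse by blast
  then have "(A ** transpose A) ** gram_inv = mat 1 \<and> gram_inv ** (A ** transpose A) = mat 1"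
    unfolding gram_inv_def matrix_inv_def invertible_def by (rule someI_ex)
  then show "(A ** transpose A) ** gram_inv = mat 1" "gram_inv ** (A ** transpose A) = mat 1"
    by auto
qed

lemma transpose_gram_inv: "transpose gram_inv = gram_inv"
proof -
  have "transpose gram_inv ** (A ** transpose A) = mat 1"
    using arg_cong[OF gram_inv_inverse(1), of transpose] by (simp add: matrix_transpose_mul)
  then have "transpose gram_inv = transpose gram_inv ** ((A ** transpose A) ** gram_inv)"
    by (simp add: gram_inv_inverse(1) matrix_mul_rid)
  also have "\<dots> = (transpose gram_inv ** (A ** transpose A)) ** gram_inv"
    by (simp add: matrix_mul_assoc)
  also have "\<dots> = gram_inv"
    using \<open>transpose gram_inv ** (A ** transpose A) = mat 1\<close> by (simp add: matrix_mul_lid)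
  finally show ?thesis .
qed

lemma right_inverse_apply: "A *v (transpose A *v (gram_inv *v w)) = w"
  by (metis gram_inv_inverse(1) matrix_vector_mul_assoc matrix_vector_mul_lid)

lemma gram_inv_gram_apply: "gram_inv *v (A *v (transpose A *v w)) = w"
  by (metis gram_inv_inverse(2) matrix_vector_mul_assoc matrix_vector_mul_lid)

lemma inner_gram_inv_commute: "(gram_inv *v u) \<bullet> w = u \<bullet> (gram_inv *v w)"
  by (metis transpose_gram_inv inner_matrix_vector_transpose inner_commute)

lemma projP_apply: "projP A *v v = v - transpose A *v (gram_inv *v (A *v v))"
  unfolding projP_def gram_inv_def[symmetric]
  by (simp add: matrix_vector_mult_diff_rdistrib matrix_vector_mul_assoc matrix_mul_assoc)

lemma kernel_projP: "A *v (projP A *v v) = 0"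
  by (simp add: projP_apply matrix_vector_mult_diff_distrib right_inverse_apply)

lemma projP_kernel: "A *v w = 0 \<Longrightarrow> projP A *v w = w"
  by (simp add: projP_apply)

lemma projP_range_transpose: "projP A *v (transpose A *v u) = 0"
  by (simp add: projP_apply gram_inv_gram_apply)

lemma inner_projP_commute: "(projP A *v v) \<bullet> w = v \<bullet> (projP A *v w)"
proof -
  have "(transpose A *v (gram_inv *v (A *v v))) \<bullet> w
      = v \<bullet> (transpose A *v (gram_inv *v (A *v w)))"
    by (metis inner_matrix_vector_transpose inner_commute inner_gram_inv_commute)
  then show ?thesis by (simp add: projP_apply inner_diff_left inner_diff_right)
qed

lemma projP_projP: "projP A *v (projP A *v v) = projP A *v v"
  by (rule projP_kernel[OF kernel_projP])

lemma inner_projP_self: "v \<bullet> (projP A *v v) = (norm (projP A *v v))\<^sup>2"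
  by (metis projP_projP inner_projP_commute power2_norm_eq_inner)

lemma inner_complement_projP:
  "(v - projP A *v v) \<bullet> (w - projP A *v w) = v \<bullet> (w - projP A *v w)"
  by (simp add: inner_diff_left inner_diff_right inner_projP_commute projP_projP)

lemma norm_projP_pythagoras:
  "(norm v)\<^sup>2 = (norm (projP A *v v))\<^sup>2 + (norm (v - projP A *v v))\<^sup>2"
proof -
  have "(projP A *v v) \<bullet> (v - projP A *v v) = 0"
    using inner_projP_self[of v] by (simp add: inner_diff_right inner_commute power2_norm_eq_inner)
  then show ?thesis
    by (simp add: power2_norm_eq_inner inner_diff_left inner_diff_right inner_commute)
qed

lemma norm_projP_le: "norm (projP A *v v) \<le> norm v"
  using norm_projP_pythagoras[of v] by (simp add: power2_le_imp_le)

lemma norm_complement_projP_le: "norm (v - projP A *v v) \<le> norm v"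
  using norm_projP_pythagoras[of v] by (simp add: power2_le_imp_le)

lemma norm_min_norm_solution_le: "norm (transpose A *v (gram_inv *v w)) \<le> norm w / s"
proof -
  define u where "u = gram_inv *v w"
  have "(norm (transpose A *v u))\<^sup>2 = u \<bullet> w"
    by (metis u_def right_inverse_apply inner_matrix_vector_transpose inner_commute
        power2_norm_eq_inner)
  also have "\<dots> \<le> norm u * norm w" by (rule norm_cauchy_schwarz)
  also have "\<dots> \<le> (norm (transpose A *v u) / s) * norm w"
    using norm_transpose_ge[of u] s_pos
    by (intro mult_right_mono) (simp_all add: pos_le_divide_eq mult.commute)
  finally have "(norm (transpose A *v u))\<^sup>2 \<le> norm (transpose A *v u) * (norm w / s)"
    by simp
  then show ?thesis unfolding u_def by (rule le_if_square_le_mult) (use s_pos in simp_all)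
qed

lemma qp_minimizer_eq:
  assumes b: "0 < b" and feasible: "c + A *v d = 0"
    and minimal: "\<And>d'. c + A *v d' = 0 \<Longrightarrow>
      1/2 * b * (norm d)\<^sup>2 + g \<bullet> d \<le> 1/2 * b * (norm d')\<^sup>2 + g \<bullet> d'"
  shows "d = - ((1/b) *\<^sub>R (projP A *v g)) - transpose A *v (gram_inv *v c)"
proof -
  define d0 where "d0 = - ((1/b) *\<^sub>R (projP A *v g)) - transpose A *v (gram_inv *v c)"
  have feasible0: "c + A *v d0 = 0"
    by (simp add: d0_def matrix_vector_mult_diff_distrib matrix_vector_mult_scaleR
        matrix_vector_mult_uminus_right kernel_projP right_inverse_apply)
  define h where "h = d - d0"
  have "A *v h = (c + A *v d) - (c + A *v d0)"
    by (simp add: h_def matrix_vector_mult_diff_distrib)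
  then have "A *v h = 0" using feasible feasible0 by simp
  have "b *\<^sub>R d0 + g = transpose A *v (gram_inv *v (A *v g) - b *\<^sub>R (gram_inv *v c))"
    using b by (simp add: d0_def projP_apply algebra_simps)
  then have "(b *\<^sub>R d0 + g) \<bullet> h = 0"
    using \<open>A *v h = 0\<close> by (metis inner_matrix_vector_transpose inner_commute inner_zero_right)
  then have "b * (d0 \<bullet> h) + g \<bullet> h = 0" by (simp add: inner_add_left)
  moreover have
    "1/2 * b * (norm d)\<^sup>2 = 1/2 * b * (norm d0)\<^sup>2 + b * (d0 \<bullet> h) + 1/2 * b * (norm h)\<^sup>2"
    unfolding h_def by (simp add: power2_norm_eq_inner algebra_simps inner_commute)
  moreover have "g \<bullet> d = g \<bullet> d0 + g \<bullet> h" by (simp add: h_def inner_diff_right)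
  ultimately have "1/2 * b * (norm h)\<^sup>2 \<le> 0"
    using minimal[OF feasible0] by linarith
  then have "h = 0" using b by (simp add: mult_le_0_iff)
  then show ?thesis by (simp add: h_def d0_def)
qed

end

locale full_row_rank_perturbation = full_row_rank A \<gamma>
  for A :: "real^'n^'m" and \<gamma> :: real +
  fixes B :: "real^'n^'m" and e :: real
  assumes perturbation_le: "\<And>v. norm ((B - A) *v v) \<le> e * norm v"
    and e_nonneg: "0 \<le> e" and e_less: "e < \<gamma>"
begin

lemma norm_transpose_diff_le: "norm (transpose A *v u - transpose B *v u) \<le> e * norm u"
  using norm_transpose_matrix_vector_le[OF perturbation_le e_nonneg, of u]
  by (simp add: transpose_diff matrix_vector_mult_diff_rdistrib norm_minus_commute)

sublocale B: full_row_rank B "\<gamma> - e"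
proof
  show "0 < \<gamma> - e" using e_less by simp
  fix y
  have "norm (transpose A *v y)
      \<le> norm (transpose B *v y) + norm (transpose A *v y - transpose B *v y)"
    by (metis add.commute diff_add_cancel norm_triangle_ineq)
  then show "(\<gamma> - e) * norm y \<le> norm (transpose B *v y)"
    using norm_transpose_ge[of y] norm_transpose_diff_le[of y] by (simp add: left_diff_distrib)
qed

lemma e_div_less_1: "e / \<gamma> < 1"
  using e_less s_pos by simp

lemma norm_perturbed_projP_row_space_le:
  "norm (projP B *v (v - projP A *v v)) \<le> e / \<gamma> * norm (v - projP A *v v)"
proof -
  define u where "u = gram_inv *v (A *v v)"
  have "projP B *v (transpose A *v u) = projP B *v (transpose A *v u - transpose B *v u)"
    by (simp add: matrix_vector_mult_diff_distrib B.projP_range_transpose)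
  then have "norm (projP B *v (transpose A *v u)) \<le> norm (transpose A *v u - transpose B *v u)"
    by (metis B.norm_projP_le)
  also have "\<dots> \<le> e * norm u" by (rule norm_transpose_diff_le)
  also have "\<dots> \<le> e * (norm (transpose A *v u) / \<gamma>)"
    using norm_transpose_ge[of u] s_pos e_nonneg
    by (intro mult_left_mono) (auto simp: pos_le_divide_eq mult.commute)
  finally show ?thesis by (simp add: u_def projP_apply)
qed

lemma norm_row_space_part_perturbed_kernel_le:
  assumes "B *v z = 0"
  shows "norm (z - projP A *v z) \<le> e / \<gamma> * norm z"
proof -
  have "(norm (z - projP A *v z))\<^sup>2 = z \<bullet> (z - projP A *v z)"
    by (metis inner_complement_projP power2_norm_eq_inner)
  also have "\<dots> = z \<bullet> (projP B *v (z - projP A *v z))"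
    by (metis assms B.projP_kernel B.inner_projP_commute)
  also have "\<dots> \<le> norm z * (e / \<gamma> * norm (z - projP A *v z))"
    using norm_cauchy_schwarz order_trans mult_left_mono norm_perturbed_projP_row_space_le
      norm_ge_zero by metis
  finally have "(norm (z - projP A *v z))\<^sup>2 \<le> norm (z - projP A *v z) * (e / \<gamma> * norm z)"
    by (simp add: algebra_simps)
  then show ?thesis by (rule le_if_square_le_mult) (use e_nonneg s_pos in simp_all)
qed

lemma projP_maps_perturbed_kernel_onto_kernel:
  assumes "A *v y = 0"
  shows "\<exists>z. B *v z = 0 \<and> projP A *v z = y"
proof -
  define N where "N = {x. A *v x = 0}"
  define NB where "NB = {x. B *v x = 0}"
  have "inj_on (\<lambda>z. projP A *v z) NB"
  proof (rule inj_onI)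
    fix z1 z2 assume "z1 \<in> NB" "z2 \<in> NB" "projP A *v z1 = projP A *v z2"
    then have "B *v (z1 - z2) = 0" "projP A *v (z1 - z2) = 0"
      by (auto simp: NB_def matrix_vector_mult_diff_distrib)
    then have "(1 - e / \<gamma>) * norm (z1 - z2) \<le> 0"
      using norm_row_space_part_perturbed_kernel_le[of "z1 - z2"] by (simp add: algebra_simps)
    then show "z1 = z2" using e_div_less_1 by (simp add: mult_le_0_iff)
  qed
  then have "dim ((\<lambda>z. projP A *v z) ` NB) = dim NB"
    using dim_image_eq[OF matrix_vector_mul_linear] span_eq_iff subspace_kernel_matrix
    unfolding NB_def by metis
  also have "\<dots> = dim N"
    unfolding N_def NB_def
    by (rule dim_kernel_eq_if_inj_transpose[OF B.inj_transpose inj_transpose])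
  finally have "(\<lambda>z. projP A *v z) ` NB = N"
    by (intro subspace_dim_equal real_vector.linear_subspace_image matrix_vector_mul_linear)
       (auto simp: N_def NB_def subspace_kernel_matrix kernel_projP)
  with assms have "y \<in> (\<lambda>z. projP A *v z) ` NB" by (simp add: N_def)
  then show ?thesis by (auto simp: NB_def)
qed

lemma norm_perturbed_row_space_part_kernel_le:
  assumes "A *v y = 0"
  shows "norm (y - projP B *v y) \<le> e / \<gamma> * norm y"
proof -
  obtain z where z: "B *v z = 0" "projP A *v z = y"
    using projP_maps_perturbed_kernel_onto_kernel[OF assms] by blast
  define t where "t = e / \<gamma>"
  define a where "a = norm y"
  define p where "p = norm (projP B *v y)"
  define r where "r = norm (y - projP B *v y)"
  have "a\<^sup>2 = (projP A *v z) \<bullet> y" by (simp add: a_def z(2) power2_norm_eq_inner)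
  also have "\<dots> = z \<bullet> y" by (simp add: inner_projP_commute projP_kernel assms)
  also have "\<dots> = z \<bullet> (projP B *v y)"
    by (simp add: B.inner_projP_commute[symmetric] B.projP_kernel z(1))
  also have "\<dots> \<le> norm z * p" unfolding p_def by (rule norm_cauchy_schwarz)
  finally have "a\<^sup>2 * a\<^sup>2 \<le> (norm z)\<^sup>2 * p\<^sup>2"
    by (metis power2_eq_square power_mono power_mult_distrib zero_le_power2)
  moreover have "(1 - t\<^sup>2) * (norm z)\<^sup>2 \<le> a\<^sup>2"
  proof -
    have "(norm z)\<^sup>2 = a\<^sup>2 + (norm (z - projP A *v z))\<^sup>2"
      unfolding a_def z(2)[symmetric] by (rule norm_projP_pythagoras)
    moreover have "(norm (z - projP A *v z))\<^sup>2 \<le> (t * norm z)\<^sup>2"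
      using norm_row_space_part_perturbed_kernel_le[OF z(1)]
      by (intro power_mono) (simp_all add: t_def)
    ultimately show ?thesis by (simp add: algebra_simps power_mult_distrib)
  qed
  moreover have "0 \<le> 1 - t\<^sup>2" using e_nonneg e_div_less_1 s_pos by (simp add: t_def power_le_one)
  ultimately have "(1 - t\<^sup>2) * a\<^sup>2 * a\<^sup>2 \<le> a\<^sup>2 * p\<^sup>2"
    by (smt (verit) mult.assoc mult.commute mult_left_mono mult_right_mono zero_le_power2)
  then have "(1 - t\<^sup>2) * a\<^sup>2 \<le> p\<^sup>2 \<or> a = 0"
    by (metis mult.commute mult_le_cancel_left_pos power_zero_numeral zero_less_power2)
  moreover have "a\<^sup>2 = p\<^sup>2 + r\<^sup>2" unfolding a_def p_def r_def by (rule B.norm_projP_pythagoras)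
  ultimately have "r\<^sup>2 \<le> (t * a)\<^sup>2"
    by (auto simp: power_mult_distrib algebra_simps)
  then show ?thesis
    using e_nonneg s_pos by (auto simp: r_def a_def t_def intro: power2_le_imp_le)
qed

lemma inner_projP_sub_perturbed_le:
  "g \<bullet> (projP A *v g) - g \<bullet> (projP B *v g) \<le> e / \<gamma> * (norm g)\<^sup>2"
proof -
  define p where "p = projP A *v g"
  define q where "q = g - projP A *v g"
  define pB where "pB = projP B *v g"
  define qB where "qB = g - projP B *v g"
  have "p \<bullet> qB = (p - projP B *v p) \<bullet> qB" by (simp add: qB_def B.inner_complement_projP)
  also have "\<dots> \<le> norm (p - projP B *v p) * norm qB" by (rule norm_cauchy_schwarz)
  also have "\<dots> \<le> e / \<gamma> * norm p * norm qB"
    by (intro mult_right_mono norm_perturbed_row_space_part_kernel_le)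
       (simp_all add: p_def kernel_projP)
  finally have pqB: "p \<bullet> qB \<le> e / \<gamma> * norm p * norm qB" .
  have "- (q \<bullet> pB) = - ((projP B *v q) \<bullet> pB)"
    by (simp add: pB_def B.projP_projP B.inner_projP_commute)
  also have "\<dots> \<le> norm (projP B *v q) * norm pB"
    using Cauchy_Schwarz_ineq2[of "projP B *v q" pB] by linarith
  also have "\<dots> \<le> e / \<gamma> * norm q * norm pB"
    by (intro mult_right_mono)
       (use norm_perturbed_projP_row_space_le[of g] in \<open>simp_all add: q_def\<close>)
  finally have qpB: "- (q \<bullet> pB) \<le> e / \<gamma> * norm q * norm pB" .
  have "norm p * norm qB + norm q * norm pB \<le> (norm g)\<^sup>2"
  proof -
    have "2 * (norm p * norm qB) \<le> (norm p)\<^sup>2 + (norm qB)\<^sup>2"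
      "2 * (norm q * norm pB) \<le> (norm q)\<^sup>2 + (norm pB)\<^sup>2"
      using sum_squares_bound by (simp_all add: mult.assoc)
    moreover have "(norm g)\<^sup>2 = (norm p)\<^sup>2 + (norm q)\<^sup>2"
      "(norm g)\<^sup>2 = (norm pB)\<^sup>2 + (norm qB)\<^sup>2"
      unfolding p_def q_def pB_def qB_def by (rule norm_projP_pythagoras B.norm_projP_pythagoras)+
    ultimately show ?thesis by linarith
  qed
  then have "e / \<gamma> * (norm p * norm qB + norm q * norm pB) \<le> e / \<gamma> * (norm g)\<^sup>2"
    using e_nonneg s_pos by (intro mult_left_mono) simp_all
  moreover have "g \<bullet> (projP A *v g) - g \<bullet> (projP B *v g) = p \<bullet> qB - q \<bullet> pB"
    by (simp add: p_def q_def pB_def qB_def inner_diff_left inner_diff_right inner_commute)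
  ultimately show ?thesis using pqB qpB by (simp add: algebra_simps)
qed

end

locale noisy_sqp_step = full_row_rank A \<gamma>
  for A :: "real^'n^'m" and \<gamma> :: real +
  fixes B :: "real^'n^'m" and g gt :: "real^'n" and c ct :: "real^'m"
    and eps_J eps_g eps_c b :: real
  assumes noise_J: "\<And>v. l1norm ((B - A) *v v) \<le> eps_J * norm v"
    and eps_J_nonneg: "0 \<le> eps_J" and eps_J_less: "eps_J < \<gamma>"
    and noise_g: "norm (gt - g) \<le> eps_g"
    and noise_c: "l1norm (ct - c) \<le> eps_c"
    and b_pos: "0 < b"
begin

sublocale full_row_rank_perturbation A \<gamma> B eps_J
  by unfold_locales (use noise_J norm_le_l1norm order_trans eps_J_nonneg eps_J_less in blast)+

definition step :: "real^'n" where
  "step = - ((1/b) *\<^sub>R (projP B *v gt)) - transpose B *v (B.gram_inv *v ct)"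

definition multiplier :: "real^'m" where
  "multiplier = B.gram_inv *v (B *v gt)"

lemma eps_g_nonneg: "0 \<le> eps_g"
  using noise_g norm_ge_zero order_trans by blast

lemma l1norm_noisy_constraint_le: "l1norm ct \<le> l1norm c + eps_c"
  using l1norm_triangle[of c "ct - c"] noise_c by simp

lemma norm_normal_step_le:
  "norm (transpose B *v (B.gram_inv *v ct)) \<le> (l1norm c + eps_c) / (\<gamma> - eps_J)"
proof -
  have "norm (transpose B *v (B.gram_inv *v ct)) \<le> norm ct / (\<gamma> - eps_J)"
    by (rule B.norm_min_norm_solution_le)
  also have "\<dots> \<le> (l1norm c + eps_c) / (\<gamma> - eps_J)"
    using norm_le_l1norm[of ct] l1norm_noisy_constraint_le eps_J_less
    by (intro divide_right_mono) simp_all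
  finally show ?thesis .
qed

lemma l1norm_linearized_constraint_le:
  assumes "ct + B *v d = 0"
  shows "l1norm (c + A *v d) \<le> eps_c + eps_J * norm d"
proof -
  have "c + A *v d = (c - ct) + (- ((B - A) *v d))"
    using assms by (simp add: matrix_vector_mult_diff_rdistrib algebra_simps eq_neg_iff_add_eq_0)
  also have "l1norm \<dots> \<le> l1norm (c - ct) + l1norm ((B - A) *v d)"
    using l1norm_triangle l1norm_uminus by metis
  finally show ?thesis
    using noise_c noise_J[of d] by (simp add: l1norm_minus_commute)
qed

lemma norm_projP_noisy_gradient_le:
  "norm (projP B *v gt) \<le> norm (projP A *v g) + eps_J / \<gamma> * norm g + eps_g"
proof -
  have "projP B *v gt
      = projP B *v (projP A *v g) + projP B *v (g - projP A *v g) + projP B *v (gt - g)"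
    by (simp add: matrix_vector_mult_diff_distrib)
  then have "norm (projP B *v gt)
      \<le> norm (projP B *v (projP A *v g)) + norm (projP B *v (g - projP A *v g))
        + norm (projP B *v (gt - g))"
    by (metis norm_triangle_le order_refl add_mono)
  moreover have "norm (projP B *v (projP A *v g)) \<le> norm (projP A *v g)"
    by (rule B.norm_projP_le)
  moreover have "norm (projP B *v (g - projP A *v g)) \<le> eps_J / \<gamma> * norm g"
    using norm_perturbed_projP_row_space_le[of g] norm_complement_projP_le[of g]
      eps_J_nonneg s_pos
    by (meson divide_nonneg_nonneg less_imp_le mult_left_mono order_trans)
  moreover have "norm (projP B *v (gt - g)) \<le> eps_g"
    using B.norm_projP_le noise_g order_trans by blast
  ultimately show ?thesis by linarith
qed

lemma norm_step_le:
  "norm step \<le> 1/b * (norm (projP A *v g) + eps_J / \<gamma> * norm g + eps_g)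
    + (l1norm c + eps_c) / (\<gamma> - eps_J)"
proof -
  have "norm step \<le> 1/b * norm (projP B *v gt) + norm (transpose B *v (B.gram_inv *v ct))"
    unfolding step_def
    using norm_triangle_ineq4[of "- ((1/b) *\<^sub>R (projP B *v gt))"
        "transpose B *v (B.gram_inv *v ct)"] b_pos
    by simp
  then show ?thesis
    using norm_projP_noisy_gradient_le norm_normal_step_le b_pos
    by (smt (verit) divide_pos_pos mult_left_mono zero_less_one)
qed

lemma inner_projP_noisy_gradient_ge:
  "g \<bullet> (projP A *v g) - eps_J / \<gamma> * (norm g)\<^sup>2 - norm g * eps_g \<le> g \<bullet> (projP B *v gt)"
proof -
  have "- (g \<bullet> (projP B *v (gt - g))) \<le> norm g * norm (projP B *v (gt - g))"
    using Cauchy_Schwarz_ineq2[of g "projP B *v (gt - g)"] by linarith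
  also have "\<dots> \<le> norm g * eps_g"
    using B.norm_projP_le noise_g order_trans by (blast intro: mult_left_mono norm_ge_zero)
  finally have "- (g \<bullet> (projP B *v (gt - g))) \<le> norm g * eps_g" .
  moreover have "g \<bullet> (projP B *v gt) = g \<bullet> (projP B *v g) + g \<bullet> (projP B *v (gt - g))"
    by (simp add: matrix_vector_mult_diff_distrib inner_diff_right)
  ultimately show ?thesis using inner_projP_sub_perturbed_le[of g] by linarith
qed

lemma inner_step_le:
  "g \<bullet> step \<le> - (1/b * (g \<bullet> (projP B *v gt))) + infnorm multiplier * (l1norm c + eps_c)
    + eps_g * ((l1norm c + eps_c) / (\<gamma> - eps_J))"
proof -
  define z where "z = transpose B *v (B.gram_inv *v ct)"
  have "gt \<bullet> z = multiplier \<bullet> ct"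
    unfolding z_def multiplier_def
    by (metis inner_matrix_vector_transpose inner_commute B.inner_gram_inv_commute)
  then have "- (gt \<bullet> z) \<le> infnorm multiplier * (l1norm c + eps_c)"
    using abs_inner_le_infnorm_mult_l1norm[of multiplier ct] l1norm_noisy_constraint_le
      infnorm_pos_le[of multiplier]
    by (smt (verit) mult_left_mono)
  moreover have "- ((g - gt) \<bullet> z) \<le> eps_g * ((l1norm c + eps_c) / (\<gamma> - eps_J))"
  proof -
    have "- ((g - gt) \<bullet> z) \<le> norm (g - gt) * norm z"
      using Cauchy_Schwarz_ineq2[of "g - gt" z] by linarith
    also have "\<dots> \<le> eps_g * ((l1norm c + eps_c) / (\<gamma> - eps_J))"
      using noise_g norm_normal_step_le eps_g_nonneg
      by (intro mult_mono) (simp_all add: z_def norm_minus_commute)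
    finally show ?thesis .
  qed
  moreover have "g \<bullet> step = - (1/b * (g \<bullet> (projP B *v gt))) - gt \<bullet> z - (g - gt) \<bullet> z"
    by (simp add: step_def z_def inner_diff_right inner_diff_left)
  ultimately show ?thesis by linarith
qed

lemma model_decrease_le:
  assumes multiplier_le: "infnorm multiplier \<le> (1 - \<tau>) * p" and \<tau>: "\<tau> < 1"
  shows "g \<bullet> step + p * l1norm (c + A *v step) - p * l1norm c
    \<le> - (1 / b * (g \<bullet> (projP A *v g)) + \<tau> * p * l1norm c)
      + (1 / b * ((norm g)\<^sup>2 * (1 / \<gamma>) * eps_J + eps_g * norm g)
         + eps_g * (1 / (\<gamma> - eps_J)) * (l1norm c + eps_c)
         + p * ((2 - \<tau>) * eps_c
             + eps_J * (1 / (\<gamma> - eps_J) * (l1norm c + eps_c)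
                + 1 / b * (norm (projP A *v g) + norm g * (1 / \<gamma>) * eps_J + eps_g))))"
proof -
  define C where "C = l1norm c + eps_c"
  define D where
    "D = 1/b * (norm (projP A *v g) + eps_J / \<gamma> * norm g + eps_g) + C / (\<gamma> - eps_J)"
  define Q where "Q = eps_J / \<gamma> * (norm g)\<^sup>2 + norm g * eps_g"
  have "0 \<le> (1 - \<tau>) * p" using multiplier_le infnorm_pos_le[of multiplier] by linarith
  then have "0 \<le> p" using \<tau> by (simp add: zero_le_mult_iff)
  have "ct + B *v step = 0"
    by (simp add: step_def matrix_vector_mult_diff_distrib matrix_vector_mult_scaleR
        matrix_vector_mult_uminus_right B.kernel_projP B.right_inverse_apply)
  then have "l1norm (c + A *v step) \<le> eps_c + eps_J * D"
    using l1norm_linearized_constraint_le mult_left_mono[OF norm_step_le eps_J_nonneg]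
    unfolding D_def C_def by force
  then have constraint: "p * l1norm (c + A *v step) \<le> p * (eps_c + eps_J * D)"
    using \<open>0 \<le> p\<close> by (rule mult_left_mono)
  have multiplier: "infnorm multiplier * C \<le> (1 - \<tau>) * p * C"
    using multiplier_le l1norm_nonneg[of c] noise_c l1norm_nonneg[of "ct - c"]
    unfolding C_def by (intro mult_right_mono) simp_all
  have "1/b * (g \<bullet> (projP A *v g) - Q) \<le> 1/b * (g \<bullet> (projP B *v gt))"
    using inner_projP_noisy_gradient_ge b_pos unfolding Q_def by (intro mult_left_mono) simp_all
  then have gradient:
    "- (1/b * (g \<bullet> (projP B *v gt))) \<le> - (1/b * (g \<bullet> (projP A *v g))) + 1/b * Q"
    by (simp only: right_diff_distrib)
  have "g \<bullet> step + p * l1norm (c + A *v step) - p * l1norm c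
      \<le> - (1/b * (g \<bullet> (projP B *v gt))) + infnorm multiplier * C + eps_g * (C / (\<gamma> - eps_J))
        + p * (eps_c + eps_J * D) - p * l1norm c"
    using inner_step_le constraint unfolding C_def by linarith
  also have "\<dots> \<le> - (1/b * (g \<bullet> (projP A *v g))) + 1/b * Q + (1 - \<tau>) * p * C
        + eps_g * (C / (\<gamma> - eps_J)) + p * (eps_c + eps_J * D) - p * l1norm c"
    using multiplier gradient by linarith
  also have "\<dots> = - (1 / b * (g \<bullet> (projP A *v g)) + \<tau> * p * l1norm c)
      + (1 / b * ((norm g)\<^sup>2 * (1 / \<gamma>) * eps_J + eps_g * norm g)
         + eps_g * (1 / (\<gamma> - eps_J)) * (l1norm c + eps_c)
         + p * ((2 - \<tau>) * eps_c
             + eps_J * (1 / (\<gamma> - eps_J) * (l1norm c + eps_c)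
                + 1 / b * (norm (projP A *v g) + norm g * (1 / \<gamma>) * eps_J + eps_g))))"
    unfolding C_def D_def Q_def by (simp add: algebra_simps)
  finally show ?thesis .
qed

end

lemma error_absorbed_by_decrease:
  fixes l M \<psi> E \<theta> :: real
  assumes "E / (1 - \<theta>) \<le> \<psi>" "\<psi> \<le> M" "l \<le> - M + E" "0 \<le> \<theta>" "\<theta> < 1"
  shows "l \<le> - \<theta> * M \<and> - \<theta> * M \<le> - \<theta> * \<psi>"
proof -
  have "E \<le> (1 - \<theta>) * \<psi>" using assms(1,5) by (simp add: pos_divide_le_eq mult.commute)
  moreover have "(1 - \<theta>) * \<psi> \<le> (1 - \<theta>) * M" "\<theta> * \<psi> \<le> \<theta> * M"
    using assms(2,4,5) by (simp_all add: mult_left_mono)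
  ultimately show ?thesis using assms(3) by (simp add: algebra_simps)
qed

theorem corollary3p2:
  fixes f :: "real ^ 'n \<Rightarrow> real" and c :: "real ^ 'n \<Rightarrow> real ^ 'm"
    and g :: "real ^ 'n \<Rightarrow> real ^ 'n" and J :: "real ^ 'n \<Rightarrow> real ^ 'n ^ 'm"
    and ft :: "real ^ 'n \<Rightarrow> real" and ct :: "real ^ 'n \<Rightarrow> real ^ 'm"
    and gt :: "real ^ 'n \<Rightarrow> real ^ 'n" and Jt :: "real ^ 'n \<Rightarrow> real ^ 'n ^ 'm"
    and eps_f eps_c eps_g eps_J \<gamma> b_u \<tau> \<theta>\<^sub>1 :: real
    and x d :: "nat \<Rightarrow> real ^ 'n" and \<beta> \<pi> :: "nat \<Rightarrow> real"
    and k :: nat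
  assumes mn: "CARD('m) < CARD('n)"
    and f_deriv: "\<And>y. (f has_derivative (\<lambda>h. g y \<bullet> h)) (at y)"
    and c_deriv: "\<And>y. (c has_derivative (\<lambda>h. J y *v h)) (at y)"
    and f_smooth: "continuous_on UNIV g"
    and c_smooth: "continuous_on UNIV J"
    and noise_f: "\<And>y. \<bar>ft y - f y\<bar> \<le> eps_f"
    and noise_c: "\<And>y. l1norm (ct y - c y) \<le> eps_c"
    and noise_g: "\<And>y. norm (gt y - g y) \<le> eps_g"
    and noise_J: "\<And>y. opnorm_1_2 (Jt y - J y) \<le> eps_J"
    and sigma: "\<And>j. sigma_min (J (x j)) \<ge> \<gamma>"
    and gamma: "\<gamma> > eps_J"
    and beta: "\<And>j. 0 < \<beta> j \<and> \<beta> j \<le> b_u"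
    and d_feas: "\<And>j. ct (x j) + Jt (x j) *v d j = 0"
    and d_opt: "\<And>j d'. ct (x j) + Jt (x j) *v d' = 0 \<Longrightarrow>
        1/2 * \<beta> j * (norm (d j))\<^sup>2 + gt (x j) \<bullet> d j
          \<le> 1/2 * \<beta> j * (norm d')\<^sup>2 + gt (x j) \<bullet> d'"
    and tau: "0 < \<tau>" "\<tau> < 1"
    and pi: "\<And>j. \<pi> j \<ge> 1 / (1 - \<tau>) *
        infnorm (matrix_inv (Jt (x j) ** transpose (Jt (x j))) *v (Jt (x j) *v gt (x j)))"
    and theta: "0 \<le> \<theta>\<^sub>1" "\<theta>\<^sub>1 < 1"
    and cond: "(let \<delta> = 1 / (\<gamma> - eps_J); \<eta> = 1 / \<gamma>;
                   xk = x k; bk = \<beta> k; pk = \<pi> k;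
                   \<psi> = 1 / b_u * (norm (projP (J xk) *v g xk))\<^sup>2 + pk * \<tau> * l1norm (c xk);
                   E = 1 / bk * ((norm (g xk))\<^sup>2 * \<eta> * eps_J + eps_g * norm (g xk))
                       + eps_g * \<delta> * (l1norm (c xk) + eps_c)
                       + pk * ((2 - \<tau>) * eps_c
                           + eps_J * (\<delta> * (l1norm (c xk) + eps_c)
                              + 1 / bk * (norm (projP (J xk) *v g xk)
                                          + norm (g xk) * \<eta> * eps_J + eps_g)))
               in \<psi> \<ge> E / (1 - \<theta>\<^sub>1))"
  shows "(let xk = x k; dk = d k; bk = \<beta> k; pk = \<pi> k;
              lk = g xk \<bullet> dk + pk * l1norm (c xk + J xk *v dk) - pk * l1norm (c xk);
              \<psi> = 1 / b_u * (norm (projP (J xk) *v g xk))\<^sup>2 + pk * \<tau> * l1norm (c xk);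
              M = 1 / bk * (g xk \<bullet> (projP (J xk) *v g xk)) + \<tau> * pk * l1norm (c xk)
          in lk \<le> - \<theta>\<^sub>1 * M \<and> - \<theta>\<^sub>1 * M \<le> - \<theta>\<^sub>1 * \<psi>)"
proof -
  have "0 \<le> eps_J" using noise_J opnorm_1_2_nonneg order_trans by blast
  interpret noisy_sqp_step "J (x k)" \<gamma> "Jt (x k)" "g (x k)" "gt (x k)" "c (x k)" "ct (x k)"
    eps_J eps_g eps_c "\<beta> k"
  proof unfold_locales
    show "0 < \<gamma>" using gamma \<open>0 \<le> eps_J\<close> by linarith
  qed (use norm_transpose_ge_sigma_min[OF sigma] l1norm_le_opnorm_1_2[OF noise_J]
         \<open>0 \<le> eps_J\<close> gamma noise_g noise_c beta in auto)
  have step: "d k = step"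
    unfolding step_def by (rule B.qp_minimizer_eq[OF b_pos d_feas d_opt])
  have multiplier: "infnorm multiplier \<le> (1 - \<tau>) * \<pi> k"
    using pi[of k] tau by (simp add: multiplier_def B.gram_inv_def field_simps)
  show ?thesis
    unfolding Let_def
  proof (rule error_absorbed_by_decrease[OF cond[unfolded Let_def]])
    show "1 / b_u * (norm (projP (J (x k)) *v g (x k)))\<^sup>2 + \<pi> k * \<tau> * l1norm (c (x k))
      \<le> 1 / \<beta> k * (g (x k) \<bullet> (projP (J (x k)) *v g (x k))) + \<tau> * \<pi> k * l1norm (c (x k))"
      using beta[of k] by (simp add: inner_projP_self frac_le divide_right_mono)
  qed (use model_decrease_le[OF multiplier tau(2)] step theta in simp_all)
qed

end
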